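(* Let $r \geq 4$, let $t \geq 1$, and let $H_t$ be a member of the family $\mathcal H_t$ (defined in the context), with vertex sequence $V_0 \subset V_1 \subset \cdots \subset V_t$ and added vertices $v_1,\dots,v_t$. Run the $K_r$-bootstrap process starting from $H_t$. Then: (a) for every vertex $u \in V_{t-2}$ (with $V_{-1} := \emptyset$), the edge $\{u, v_t\}$ is either already present in $H_t$ or becomes active precisely at time $t$; (b) for every $0 \leq s \leq t$, at time $s$ the vertex set $V_s$ spans a complete graph in $\langle H_t \rangle_s$, i.e. $\langle H_t\rangle_s[V_s] \cong K_{r-1+s}$.
   Context: $K_r$-bootstrap percolation: for a graph $G$ on vertex set $[n]$, set $G_0 := G$ and $G_{t+1} := G_t \cup \{e : \exists$ a copy $H$ of $K_r$ with $e \in H \subseteq G_t \cup \{e\}\}$; write $\langle G \rangle_t := G_t$. The family $\mathcal H_t$ ($t \geq 1$) is defined recursively. Let $H_0$ be an $(r-1)$-clique (the body) with vertex set $V_0$, and let $v_0$ be an arbitrary fixed vertex of $V_0$. A graph $H_t \in \mathcal H_t$ has vertex set $V_t := V_{t-1} \cup \{v_t\}$ with a new vertex $v_t$, and satisfies: (i) $H_t[V_{t-1}] = H_{t-1}$ for some $H_{t-1} \in \mathcal H_{t-1}$ (with $\mathcal H_0=\{H_0\}$); (ii) $v_{t-1} \in N(v_t)$; (iii) $|N(v_t)| = r-2$, where $N(v_t) \subseteq V_{t-1}$; (iv) for $t \geq 2$, $N(v_t) \setminus \{v_{t-1}\} \not\subseteq N(v_{t-1})$. For $t=1$ conditions (i)–(iii)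 make $H_1$ the graph $K_r$ minus one edge, and $\mathcal H_1 = \{K_r - e\}$. Such $H_t$ has $r-1+t$ vertices and $\binom{r-1}{2} + t(r-2)$ edges. *)

theory Defs
  imports Main
begin

text \<open>Simple graphs on vertex type nat are represented by their edge sets:
  an edge is a 2-element set of vertices.\<close>

type_synonym graph = "nat set set"

definition is_clique :: "graph \<Rightarrow> nat set \<Rightarrow> bool" where
  "is_clique G K \<longleftrightarrow> (\<forall>x\<in>K. \<forall>y\<in>K. x \<noteq> y \<longrightarrow> {x, y} \<in> G)"

definition bp_step :: "nat \<Rightarrow> graph \<Rightarrow> graph" where
  "bp_step r G = G \<union> {e. card e = 2 \<and>
      (\<exists>K. finite K \<and> card K = r \<and> e \<subseteq> K \<and> is_clique (G \<union> {e}) K)}"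

definition bp :: "nat \<Rightarrow> graph \<Rightarrow> nat \<Rightarrow> graph" where
  "bp r G s = (bp_step r ^^ s) G"

definition Vset :: "nat set \<Rightarrow> (nat \<Rightarrow> nat) \<Rightarrow> nat \<Rightarrow> nat set" where
  "Vset V0 v s = V0 \<union> v ` {1..s}"

definition Hedges :: "nat set \<Rightarrow> (nat \<Rightarrow> nat) \<Rightarrow> (nat \<Rightarrow> nat set) \<Rightarrow> nat \<Rightarrow> graph" where
  "Hedges V0 v N t = {{x, y} | x y. x \<in> V0 \<and> y \<in> V0 \<and> x \<noteq> y}
     \<union> (\<Union>i\<in>{1..t}. {{v i, u} | u. u \<in> N i})"

text \<open>H is a member of the family \<H>_t (unrolled recursive definition), with body V0,
  distinguished vertex v 0 \<in> V0, added vertices v 1, ..., v t and neighbourhoods N i.\<close>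
definition in_family :: "nat \<Rightarrow> nat \<Rightarrow> nat set \<Rightarrow> (nat \<Rightarrow> nat) \<Rightarrow> (nat \<Rightarrow> nat set) \<Rightarrow> graph \<Rightarrow> bool" where
  "in_family r t V0 v N H \<longleftrightarrow>
     finite V0 \<and> card V0 = r - 1 \<and> v 0 \<in> V0 \<and>
     (\<forall>i\<in>{1..t}.
        v i \<notin> Vset V0 v (i - 1) \<and>
        N i \<subseteq> Vset V0 v (i - 1) \<and>
        v (i - 1) \<in> N i \<and>
        card (N i) = r - 2 \<and>
        (i \<ge> 2 \<longrightarrow> \<not> (N i - {v (i - 1)} \<subseteq> N (i - 1)))) \<and>
     H = Hedges V0 v N t"

end

theory Submission
  imports Defs
begin

text \<open>The clique on V_s grows by one vertex per step: v_(s+1) is adjacent to the r - 2 vertices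
  N(v_(s+1)) of the clique on V_s, so together with any other vertex of V_s they form a K_r minus
  one edge, and that edge appears at time s + 1. Conversely, by time s no edge appears outside H and
  the clique on V_s: a copy of K_r creating a new edge at time s + 1 would have a last vertex v_m with
  m > s + 1, whose edges back into V_(m-1) are still just those to N(v_m). Counting forces the copy
  to consist of v_m, N(v_m) and one further vertex, and then the edges from v_(m-1) inside the copy
  give N(v_m) - {v_(m-1)} \<subseteq> N(v_(m-1)), contradicting condition (iv). Hence an edge {u, v_t}
  outside H is absent at time t - 1 and present at time t.\<close>

lemma is_clique_insert:
  "is_clique G (insert x A) \<longleftrightarrow> is_clique G A \<and> (\<forall>y\<in>A. y \<noteq> x \<longrightarrow> {x, y} \<in> G)"
  unfolding is_clique_def by (auto simp: insert_commute)

lemma is_clique_mono: "is_clique G A \<Longrightarrow> G \<subseteq> G' \<Longrightarrow> is_clique G' A"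
  unfolding is_clique_def by blast

lemma is_clique_vertex_has_edge:
  assumes clique: "is_clique (G \<union> {e}) K" and "finite K" "card K \<ge> 3" and "x \<in> K"
  shows "\<exists>y. {x, y} \<in> G"
proof (rule ccontr)
  assume no_edge: "\<nexists>y. {x, y} \<in> G"
  have "\<not> card (K - {x}) \<le> Suc 0" using assms by simp
  then obtain y z where "y \<in> K - {x}" "z \<in> K - {x}" "y \<noteq> z"
    using card_le_Suc0_iff_eq[of "K - {x}"] \<open>finite K\<close> by auto
  then have "{x, y} \<in> G \<union> {e}" "{x, z} \<in> G \<union> {e}"
    using clique \<open>x \<in> K\<close> unfolding is_clique_def by auto
  then have "{x, y} = e" "{x, z} = e" using no_edge by auto
  then show False using \<open>y \<noteq> z\<close> \<open>y \<in> K - {x}\<close> by (auto simp: doubleton_eq_iff)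
qed

lemma bp_0 [simp]: "bp r G 0 = G"
  by (simp add: bp_def)

lemma bp_Suc: "bp r G (Suc s) = bp_step r (bp r G s)"
  by (simp add: bp_def)

lemma subset_bp_step: "G \<subseteq> bp_step r G"
  by (auto simp: bp_step_def)

lemma bp_mono: "a \<le> b \<Longrightarrow> bp r G a \<subseteq> bp r G b"
proof (induction b rule: dec_induct)
  case (step b)
  then show ?case using subset_bp_step[of "bp r G b" r] by (simp add: bp_Suc)
qed simp

lemma bp_step_intro:
  assumes "card e = 2" "finite K" "card K = r" "e \<subseteq> K" "is_clique (G \<union> {e}) K"
  shows "e \<in> bp_step r G"
  using assms unfolding bp_step_def by blast

lemma is_clique_bp_step_insert:
  assumes clique: "is_clique G A" and S: "S \<subseteq> A" "finite S" "card S = r - 2" and "2 \<le> r"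
    and "x \<notin> A" and joined: "\<forall>c\<in>S. {x, c} \<in> G"
  shows "is_clique (bp_step r G) (insert x A)"
proof -
  have "{x, y} \<in> bp_step r G" if "y \<in> A" for y
  proof (cases "y \<in> S")
    case True
    then show ?thesis using joined subset_bp_step by blast
  next
    case False
    let ?K = "insert x (insert y S)"
    have "is_clique G (insert y S)"
      using clique S \<open>y \<in> A\<close> unfolding is_clique_def by blast
    then have "is_clique (G \<union> {{x, y}}) (insert y S)"
      by (rule is_clique_mono) blast
    then have "is_clique (G \<union> {{x, y}}) ?K"
      using joined by (simp add: is_clique_insert)
    moreover have "x \<notin> insert y S" using S \<open>x \<notin> A\<close> \<open>y \<in> A\<close> by blast
    then have "card ?K = r" using S False \<open>2 \<le> r\<close> by simp
    ultimately show ?thesis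
      using \<open>x \<notin> insert y S\<close> S by (intro bp_step_intro) auto
  qed
  then show ?thesis
    using is_clique_mono[OF clique subset_bp_step] by (simp add: is_clique_insert)
qed

lemma Vset_0 [simp]: "Vset V0 v 0 = V0"
  by (simp add: Vset_def)

lemma Vset_Suc: "Vset V0 v (Suc s) = insert (v (Suc s)) (Vset V0 v s)"
  by (auto simp: Vset_def atLeastAtMostSuc_conv)

lemma Vset_mono: "a \<le> b \<Longrightarrow> Vset V0 v a \<subseteq> Vset V0 v b"
  by (auto simp: Vset_def)

lemma v_in_Vset: "1 \<le> i \<Longrightarrow> i \<le> j \<Longrightarrow> v i \<in> Vset V0 v j"
  by (auto simp: Vset_def)

lemma finite_Vset: "finite V0 \<Longrightarrow> finite (Vset V0 v s)"
  by (simp add: Vset_def)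

lemma Vset_last_vertex:
  assumes "K \<subseteq> Vset V0 v t" and "\<not> K \<subseteq> Vset V0 v s"
  shows "\<exists>m. s < m \<and> m \<le> t \<and> v m \<in> K \<and> K - {v m} \<subseteq> Vset V0 v (m - 1)"
  using assms
proof (induction t)
  case (Suc t)
  show ?case
  proof (cases "K \<subseteq> Vset V0 v t")
    case True
    then show ?thesis using Suc.IH Suc.prems(2) le_SucI by blast
  next
    case False
    then have "v (Suc t) \<in> K" "K - {v (Suc t)} \<subseteq> Vset V0 v t"
      using Suc.prems(1) by (auto simp: Vset_Suc)
    moreover have "\<not> Suc t \<le> s"
      using Suc.prems Vset_mono[of "Suc t" s V0 v] by blast
    ultimately show ?thesis by (intro exI[of _ "Suc t"]) auto
  qed
qed (use Vset_mono[of 0 s V0 v] in auto)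

locale family =
  fixes r t :: nat and V0 :: "nat set" and v :: "nat \<Rightarrow> nat"
    and N :: "nat \<Rightarrow> nat set" and H :: graph
  assumes in_family: "in_family r t V0 v N H"
begin

abbreviation V :: "nat \<Rightarrow> nat set" where "V \<equiv> Vset V0 v"

lemma H_eq: "H = Hedges V0 v N t"
  using in_family by (simp add: in_family_def)

lemma finite_V: "finite (V s)"
  using in_family by (simp add: in_family_def finite_Vset)

context
  fixes i :: nat
  assumes i: "1 \<le> i" "i \<le> t"
begin

lemma new_vertex: "v i \<notin> V (i - 1)"
  using in_family i by (simp add: in_family_def)

lemma N_subset_V: "N i \<subseteq> V (i - 1)"
  using in_family i by (simp add: in_family_def)

lemma prev_in_N: "v (i - 1) \<in> N i"
  using in_family i by (simp add: in_family_def)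

lemma card_N: "card (N i) = r - 2"
  using in_family i by (simp add: in_family_def)

lemma N_not_subset_prev: "2 \<le> i \<Longrightarrow> \<not> N i - {v (i - 1)} \<subseteq> N (i - 1)"
  using in_family i by (simp add: in_family_def)

lemma finite_N: "finite (N i)"
  using N_subset_V finite_V finite_subset by blast

lemma v_notin_V:
  assumes "j < i" shows "v i \<notin> V j"
proof -
  have "j \<le> i - 1" using assms by simp
  then show ?thesis using new_vertex Vset_mono[of j "i - 1" V0 v] by blast
qed

lemma N_edge_in_H: "u \<in> N i \<Longrightarrow> {v i, u} \<in> H"
  using i unfolding H_eq Hedges_def by auto

end

lemma is_clique_H_V0: "is_clique H V0"
  unfolding is_clique_def H_eq Hedges_def by blast

lemma H_cases:
  assumes "e \<in> H"
  obtains (body) x y where "e = {x, y}" "x \<in> V0" "y \<in> V0"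
    | (added) i u where "1 \<le> i" "i \<le> t" "u \<in> N i" "e = {v i, u}"
  using assms unfolding H_eq Hedges_def by auto

lemma H_subset_V:
  assumes "e \<in> H" shows "e \<subseteq> V t"
  using assms
proof (cases rule: H_cases)
  case body
  then show ?thesis using Vset_mono[of 0 t V0 v] by auto
next
  case (added i u)
  have "V (i - 1) \<subseteq> V t" using Vset_mono added(2) by simp
  then show ?thesis using N_subset_V[OF added(1,2)] v_in_Vset[OF added(1,2), of v V0] added by auto
qed

lemma earlier_H_neighbour_in_N:
  assumes m: "1 \<le> m" "m \<le> t" and y: "y \<in> V (m - 1)" and edge: "{v m, y} \<in> H"
  shows "y \<in> N m"
  using edge
proof (cases rule: H_cases)
  case body
  then have "v m \<in> V0" by (auto simp: doubleton_eq_iff)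
  then show ?thesis using v_notin_V[OF m, of 0] m by simp
next
  case (added i u)
  note i = added(1,2) and u = added(3) and eq = added(4)
  show ?thesis
  proof (cases "v m = v i")
    case True
    have "\<not> i < m" using v_notin_V[OF m, of i] v_in_Vset[OF i(1) le_refl, of v V0] True by metis
    moreover have "\<not> m < i" using v_notin_V[OF i, of m] v_in_Vset[OF m(1) le_refl, of v V0] True by metis
    ultimately have "i = m" by simp
    moreover have "y \<noteq> v m" using y v_notin_V[OF m, of "m - 1"] m by auto
    ultimately have "y = u" using eq by (auto simp: doubleton_eq_iff)
    with u \<open>i = m\<close> show ?thesis by simp
  next
    case False
    then have "v m = u" "y = v i" using eq by (auto simp: doubleton_eq_iff)
    then have "v m \<in> V (i - 1)" using N_subset_V[OF i] u by auto
    then have "\<not> i - 1 < m" using v_notin_V[OF m] by blast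
    then have "m < i" using m by simp
    then show ?thesis using v_notin_V[OF i, of "m - 1"] y \<open>y = v i\<close> by simp
  qed
qed

lemma earlier_neighbour_in_N:
  assumes G: "G \<subseteq> H \<union> Pow (V s)" and m: "1 \<le> m" "m \<le> t" "s < m"
    and y: "y \<in> V (m - 1)" and edge: "{v m, y} \<in> G"
  shows "y \<in> N m"
proof -
  have "{v m, y} \<notin> Pow (V s)" using v_notin_V[OF m(1,2,3)] by simp
  then show ?thesis using earlier_H_neighbour_in_N[OF m(1,2) y] G edge by blast
qed

lemma no_late_clique_completion:
  assumes G: "G \<subseteq> H \<union> Pow (V s)" and m: "Suc s < m" "m \<le> t"
    and K: "finite K" "card K = r" "2 \<le> r" "v m \<in> K" "K - {v m} \<subseteq> V (m - 1)"
    and clique: "is_clique (G \<union> {e}) K"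
  shows False
proof -
  have m1: "1 \<le> m" using m by simp
  have adj: "{x, y} \<in> G \<or> {x, y} = e" if "x \<in> K" "y \<in> K" "x \<noteq> y" for x y
    using clique that unfolding is_clique_def by blast
  have earlier_neighbour: "y \<in> N m" if "y \<in> K - {v m}" "{v m, y} \<in> G" for y
    using earlier_neighbour_in_N[OF G m1 m(2) _ _ that(2)] m K(5) that(1) by auto
  have "card (N m) < card (K - {v m})" using card_N[OF m1 m(2)] K by simp
  then obtain w where w: "w \<in> K - {v m}" "w \<notin> N m"
    using card_mono[OF finite_N[OF m1 m(2)]] by (meson leD subsetI)
  then have e: "e = {v m, w}" using adj[of "v m" w] earlier_neighbour K(4) by auto
  have "K - {v m, w} \<subseteq> N m"
  proof
    fix y assume y: "y \<in> K - {v m, w}"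
    then have "{v m, y} \<noteq> e" using e by (auto simp: doubleton_eq_iff)
    then show "y \<in> N m" using adj[of "v m" y] earlier_neighbour y K(4) by auto
  qed
  moreover have "card (K - {v m, w}) = card (N m)"
    using card_N[OF m1 m(2)] K w by (simp add: card_Diff_subset)
  ultimately have N_eq: "N m = K - {v m, w}"
    using card_subset_eq[OF finite_N[OF m1 m(2)]] by metis
  have "N m - {v (m - 1)} \<subseteq> N (m - 1)"
  proof
    fix y assume y: "y \<in> N m - {v (m - 1)}"
    have prev: "v (m - 1) \<in> N m" using prev_in_N[OF m1 m(2)] .
    then have "{v (m - 1), y} \<noteq> e" using e y N_eq by (auto simp: doubleton_eq_iff)
    then have "{v (m - 1), y} \<in> G" using adj[of "v (m - 1)" y] prev y N_eq by auto
    moreover have "V (m - 1) = insert (v (m - 1)) (V (m - 1 - 1))"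
      using Vset_Suc[of V0 v "m - 2"] m by (simp add: numeral_2_eq_2 Suc_diff_Suc)
    then have "y \<in> V (m - 1 - 1)" using y N_subset_V[OF m1 m(2)] by auto
    ultimately show "y \<in> N (m - 1)" using earlier_neighbour_in_N[OF G, of "m - 1"] m by auto
  qed
  then show False using N_not_subset_prev[OF m1 m(2)] m by simp
qed

lemma bp_step_subset:
  assumes "3 \<le> r" "s < t" and G: "G \<subseteq> H \<union> Pow (V s)"
  shows "bp_step r G \<subseteq> H \<union> Pow (V (Suc s))"
proof
  fix e assume e: "e \<in> bp_step r G"
  show "e \<in> H \<union> Pow (V (Suc s))"
  proof (cases "e \<in> G")
    case True
    then show ?thesis using G Vset_mono[of s "Suc s" V0 v] by auto
  next
    case False
    then obtain K where K: "finite K" "card K = r" "e \<subseteq> K" and clique: "is_clique (G \<union> {e}) K"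
      using e unfolding bp_step_def by auto
    have "K \<subseteq> V t"
    proof
      fix x assume "x \<in> K"
      then obtain y where "{x, y} \<in> G"
        using is_clique_vertex_has_edge[OF clique] K \<open>3 \<le> r\<close> by auto
      then show "x \<in> V t"
        using G H_subset_V Vset_mono[of s t V0 v] \<open>s < t\<close> by auto
    qed
    show ?thesis
    proof (cases "K \<subseteq> V (Suc s)")
      case True
      then show ?thesis using K by auto
    next
      case False
      then obtain m where "Suc s < m" "m \<le> t" "v m \<in> K" "K - {v m} \<subseteq> V (m - 1)"
        using Vset_last_vertex[OF \<open>K \<subseteq> V t\<close>] by blast
      then show ?thesis using no_late_clique_completion[OF G _ _ K(1,2) _ _ _ clique] \<open>3 \<le> r\<close> by auto
    qed
  qed
qed

lemma bp_subset: "3 \<le> r \<Longrightarrow> s \<le> t \<Longrightarrow> bp r H s \<subseteq> H \<union> Pow (V s)"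
proof (induction s)
  case (Suc s)
  then show ?case using bp_step_subset[of s "bp r H s"] by (simp add: bp_Suc)
qed simp

lemma is_clique_bp: "2 \<le> r \<Longrightarrow> s \<le> t \<Longrightarrow> is_clique (bp r H s) (V s)"
proof (induction s)
  case 0
  then show ?case using is_clique_H_V0 by simp
next
  case (Suc s)
  have i: "1 \<le> Suc s" "Suc s \<le> t" using Suc.prems by auto
  have "H \<subseteq> bp r H s" using bp_mono[of 0 s r H] by simp
  then have "\<forall>c\<in>N (Suc s). {v (Suc s), c} \<in> bp r H s" using N_edge_in_H[OF i] by blast
  then show ?case
    using is_clique_bp_step_insert[OF _ _ finite_N[OF i] card_N[OF i]] Suc N_subset_V[OF i]
      new_vertex[OF i] by (simp add: bp_Suc Vset_Suc)
qed

lemma edge_to_last_vertex_activated_at_t: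
  assumes "3 \<le> r" "1 \<le> t" and u: "u \<in> V (t - 1)" and "{u, v t} \<notin> H"
  shows "{u, v t} \<in> bp r H t - bp r H (t - 1)"
proof -
  have "u \<in> V t" "v t \<in> V t" "u \<noteq> v t"
    using u Vset_mono[of "t - 1" t V0 v] v_in_Vset[of t t v V0] new_vertex[of t] assms by auto
  then have "{u, v t} \<in> bp r H t"
    using is_clique_bp[of t] \<open>3 \<le> r\<close> unfolding is_clique_def by auto
  moreover have "{u, v t} \<notin> Pow (V (t - 1))" using new_vertex[of t] assms by simp
  ultimately show ?thesis using bp_subset[of "t - 1"] assms by auto
qed

end

theorem proposition1:
  fixes r t :: nat and V0 :: "nat set" and v :: "nat \<Rightarrow> nat"
    and N :: "nat \<Rightarrow> nat set" and H :: graph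
  assumes "r \<ge> 4" and "t \<ge> 1"
    and "in_family r t V0 v N H"
  shows "(\<forall>u. (t \<ge> 2 \<and> u \<in> Vset V0 v (t - 2)) \<longrightarrow>
            ({u, v t} \<in> H \<or>
             ({u, v t} \<in> bp r H t \<and> {u, v t} \<notin> bp r H (t - 1))))
       \<and> (\<forall>s\<le>t. is_clique (bp r H s) (Vset V0 v s))"
proof -
  interpret family r t V0 v N H by unfold_locales fact
  have "{u, v t} \<in> H \<or> {u, v t} \<in> bp r H t - bp r H (t - 1)" if "u \<in> V (t - 2)" for u
  proof -
    have "t - 2 \<le> t - 1" by simp
    then have "u \<in> V (t - 1)" using that Vset_mono by blast
    then show ?thesis using edge_to_last_vertex_activated_at_t assms by auto
  qed
  moreover have "\<forall>s\<le>t. is_clique (bp r H s) (V s)" using is_clique_bp assms by simp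
  ultimately show ?thesis by auto
qed

end
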